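(* Let $F$ be a finite field of odd characteristic in which $-1$ is not a square, fix $C_0\ge1$, and let $A\subseteq F^2$ be $k$-regular (with constant $C_0$). Then $$\mathcal{R}(A)\lesssim |A|^2\,k,$$ with implied constant depending only on $C_0$.
   Context: For $x\cdot y=x_1y_1+x_2y_2$ on $F^2$: $(x_0,x_1,x_2)\in(F^2)^3$ is a corner if $(x_1-x_0)\cdot(x_2-x_1)=0$; $(x_0,x_1,x_2,x_3)\in(F^2)^4$ is a rectangle if $(x_i,x_{i+1},x_{i+2})$ is a corner for each $i\in\{0,1,2,3\}$, indices mod 4; $\mathcal{R}(A)$ is the number of rectangles in $A^4$. A line in $F^2$ is $\{p+tv:t\in F\}$ with $v\ne0$. $A$ is $k$-regular (with constant $C_0$) if $k\le C_0|A|^{1/2}$ and there exist a set $L$ of lines with $k/C_0\le|L|\le C_0k$ and a partition $A=\bigsqcup_{\ell\in L}A_\ell$ with $A_\ell\subseteq\ell$ and $|A|/(C_0k)\le|A_\ell|\le C_0|A|/k$ for each $\ell\in L$. *)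

theory Defs
  imports "HOL-Algebra.Ring" "HOL-Algebra.Ring_Divisibility" Complex_Main
begin

definition odd_char :: "('a, 'b) ring_scheme \<Rightarrow> bool" where
  "odd_char R \<longleftrightarrow> \<one>\<^bsub>R\<^esub> \<oplus>\<^bsub>R\<^esub> \<one>\<^bsub>R\<^esub> \<noteq> \<zero>\<^bsub>R\<^esub>"

definition dotp :: "('a, 'b) ring_scheme \<Rightarrow> 'a \<times> 'a \<Rightarrow> 'a \<times> 'a \<Rightarrow> 'a" where
  "dotp R x y = (fst x \<otimes>\<^bsub>R\<^esub> fst y) \<oplus>\<^bsub>R\<^esub> (snd x \<otimes>\<^bsub>R\<^esub> snd y)"

definition vsub :: "('a, 'b) ring_scheme \<Rightarrow> 'a \<times> 'a \<Rightarrow> 'a \<times> 'a \<Rightarrow> 'a \<times> 'a" where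
  "vsub R x y = (fst x \<ominus>\<^bsub>R\<^esub> fst y, snd x \<ominus>\<^bsub>R\<^esub> snd y)"

definition corner :: "('a, 'b) ring_scheme \<Rightarrow> 'a \<times> 'a \<Rightarrow> 'a \<times> 'a \<Rightarrow> 'a \<times> 'a \<Rightarrow> bool" where
  "corner R x0 x1 x2 \<longleftrightarrow> dotp R (vsub R x1 x0) (vsub R x2 x1) = \<zero>\<^bsub>R\<^esub>"

definition rectangle :: "('a, 'b) ring_scheme \<Rightarrow> 'a \<times> 'a \<Rightarrow> 'a \<times> 'a \<Rightarrow> 'a \<times> 'a \<Rightarrow> 'a \<times> 'a \<Rightarrow> bool" where
  "rectangle R x0 x1 x2 x3 \<longleftrightarrow>
     corner R x0 x1 x2 \<and> corner R x1 x2 x3 \<and> corner R x2 x3 x0 \<and> corner R x3 x0 x1"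

definition rect_count :: "('a, 'b) ring_scheme \<Rightarrow> ('a \<times> 'a) set \<Rightarrow> nat" where
  "rect_count R A = card {(x0, x1, x2, x3). x0 \<in> A \<and> x1 \<in> A \<and> x2 \<in> A \<and> x3 \<in> A \<and>
                            rectangle R x0 x1 x2 x3}"

definition is_line :: "('a, 'b) ring_scheme \<Rightarrow> ('a \<times> 'a) set \<Rightarrow> bool" where
  "is_line R l \<longleftrightarrow> (\<exists>p v. p \<in> carrier R \<times> carrier R \<and> v \<in> carrier R \<times> carrier R \<and>
       v \<noteq> (\<zero>\<^bsub>R\<^esub>, \<zero>\<^bsub>R\<^esub>) \<and>
       l = {(fst p \<oplus>\<^bsub>R\<^esub> t \<otimes>\<^bsub>R\<^esub> fst v, snd p \<oplus>\<^bsub>R\<^esub> t \<otimes>\<^bsub>R\<^esub> snd v) | t. t \<in> carrier R})"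

definition k_regular :: "('a, 'b) ring_scheme \<Rightarrow> real \<Rightarrow> real \<Rightarrow> ('a \<times> 'a) set \<Rightarrow> bool" where
  "k_regular R C0 k A \<longleftrightarrow>
     k \<le> C0 * sqrt (real (card A)) \<and>
     (\<exists>L P. (\<forall>l\<in>L. is_line R l) \<and>
            k / C0 \<le> real (card L) \<and> real (card L) \<le> C0 * k \<and>
            A = (\<Union>l\<in>L. P l) \<and>
            (\<forall>l\<in>L. \<forall>l'\<in>L. l \<noteq> l' \<longrightarrow> P l \<inter> P l' = {}) \<and>
            (\<forall>l\<in>L. P l \<subseteq> l \<and>
                    real (card A) / (C0 * k) \<le> real (card (P l)) \<and>
                    real (card (P l)) \<le> C0 * real (card A) / k))"

end

theory Submission
  imports Defs
begin

text \<open>If -1 is not a square, x^2 + y^2 vanishes only at 0. Hence in a rectangle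
  (x0, x1, x2, x3) the closing vector x3 - x2 + x1 - x0, whose squared length is minus the sum of
  the four corner dot products, is zero: the fourth vertex is determined by the other three, and
  it suffices to count corners. A corner (x0, x1, x2) with x0 \<noteq> x1 asks x2 to lie on the
  perpendicular to x1 - x0 through x1. Let x2 lie on the line l of the regular structure. If l is
  not that perpendicular, x2 is determined by (x0, x1, l), giving at most |L| |A|^2 corners; if
  it is, x1 is determined by (x0, l), hence by (x0, x2), giving at most |A|^2 corners. Together
  with the |A|^2 corners with x0 = x1 this gives (|L| + 2) |A|^2, which is O(|A|^2 k).\<close>

definition param_line :: "('a, 'b) ring_scheme \<Rightarrow> 'a \<times> 'a \<Rightarrow> 'a \<times> 'a \<Rightarrow> ('a \<times> 'a) set" where
  "param_line R p d =
     {(fst p \<oplus>\<^bsub>R\<^esub> t \<otimes>\<^bsub>R\<^esub> fst d, snd p \<oplus>\<^bsub>R\<^esub> t \<otimes>\<^bsub>R\<^esub> snd d) | t. t \<in> carrier R}"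

definition perp_line_at :: "('a, 'b) ring_scheme \<Rightarrow> 'a \<times> 'a \<Rightarrow> 'a \<times> 'a \<Rightarrow> 'a \<times> 'a \<Rightarrow> 'a \<times> 'a \<Rightarrow> bool" where
  "perp_line_at R x0 x1 p d \<longleftrightarrow>
     dotp R (vsub R x1 x0) d = \<zero>\<^bsub>R\<^esub> \<and> dotp R (vsub R x1 x0) (vsub R p x1) = \<zero>\<^bsub>R\<^esub>"

definition lines_through ::
    "('a, 'b) ring_scheme \<Rightarrow> ('a \<times> 'a) set \<Rightarrow> ('a \<times> 'a \<Rightarrow> 'a \<times> 'a) \<Rightarrow> ('a \<times> 'a \<Rightarrow> 'a \<times> 'a) \<Rightarrow> bool"
  where "lines_through R A p d \<longleftrightarrow>
    (\<forall>x\<in>A. p x \<in> carrier R \<times> carrier R \<and> d x \<in> carrier R \<times> carrier R \<and>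
       d x \<noteq> (\<zero>\<^bsub>R\<^esub>, \<zero>\<^bsub>R\<^esub>) \<and> x \<in> param_line R (p x) (d x))"

definition corners :: "('a, 'b) ring_scheme \<Rightarrow> ('a \<times> 'a) set \<Rightarrow> (('a \<times> 'a) \<times> ('a \<times> 'a) \<times> ('a \<times> 'a)) set" where
  "corners R A = {(x0, x1, x2). x0 \<in> A \<and> x1 \<in> A \<and> x2 \<in> A \<and> corner R x0 x1 x2}"

context cring begin

lemma closed_quadrilateral_square_identity:
  assumes "v \<in> carrier R" "w \<in> carrier R" "s \<in> carrier R" "u = \<ominus> (v \<oplus> w \<oplus> s)"
  shows "(s \<oplus> v) \<otimes> (s \<oplus> v) = \<ominus> (v \<otimes> w \<oplus> w \<otimes> s \<oplus> s \<otimes> u \<oplus> u \<otimes> v)"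
  using assms by Ring.algebra

lemma quadrilateral_square_identity:
  assumes "a0 \<in> carrier R" "a1 \<in> carrier R" "a2 \<in> carrier R" "a3 \<in> carrier R"
  shows "(a3 \<ominus> a2 \<ominus> (a0 \<ominus> a1)) \<otimes> (a3 \<ominus> a2 \<ominus> (a0 \<ominus> a1))
   = \<ominus> ((a1 \<ominus> a0) \<otimes> (a2 \<ominus> a1) \<oplus> (a2 \<ominus> a1) \<otimes> (a3 \<ominus> a2)
        \<oplus> (a3 \<ominus> a2) \<otimes> (a0 \<ominus> a3) \<oplus> (a0 \<ominus> a3) \<otimes> (a1 \<ominus> a0))"
proof -
  have "a3 \<ominus> a2 \<ominus> (a0 \<ominus> a1) = (a3 \<ominus> a2) \<oplus> (a1 \<ominus> a0)"
    using assms by Ring.algebra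
  moreover have "a0 \<ominus> a3 = \<ominus> ((a1 \<ominus> a0) \<oplus> (a2 \<ominus> a1) \<oplus> (a3 \<ominus> a2))"
    using assms by Ring.algebra
  ultimately show ?thesis
    using closed_quadrilateral_square_identity[of "a1 \<ominus> a0" "a2 \<ominus> a1" "a3 \<ominus> a2" "a0 \<ominus> a3"] assms
    by (simp only: minus_closed)
qed

lemma dotp_quadrilateral_identity:
  assumes "x0 \<in> carrier R \<times> carrier R" "x1 \<in> carrier R \<times> carrier R"
    "x2 \<in> carrier R \<times> carrier R" "x3 \<in> carrier R \<times> carrier R"
  shows "dotp R (vsub R (vsub R x3 x2) (vsub R x0 x1)) (vsub R (vsub R x3 x2) (vsub R x0 x1))
    = \<ominus> (dotp R (vsub R x1 x0) (vsub R x2 x1) \<oplus> dotp R (vsub R x2 x1) (vsub R x3 x2)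
         \<oplus> dotp R (vsub R x3 x2) (vsub R x0 x3) \<oplus> dotp R (vsub R x0 x3) (vsub R x1 x0))"
proof -
  have sum4: "\<ominus> (P1 \<oplus> Q1 \<oplus> S1 \<oplus> T1) \<oplus> \<ominus> (P2 \<oplus> Q2 \<oplus> S2 \<oplus> T2)
      = \<ominus> ((P1 \<oplus> P2) \<oplus> (Q1 \<oplus> Q2) \<oplus> (S1 \<oplus> S2) \<oplus> (T1 \<oplus> T2))"
    if "P1 \<in> carrier R" "Q1 \<in> carrier R" "S1 \<in> carrier R" "T1 \<in> carrier R"
       "P2 \<in> carrier R" "Q2 \<in> carrier R" "S2 \<in> carrier R" "T2 \<in> carrier R"
    for P1 Q1 S1 T1 P2 Q2 S2 T2
    using that by Ring.algebra
  show ?thesis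
    using assms unfolding dotp_def vsub_def
    by (simp add: quadrilateral_square_identity sum4 mem_Times_iff)
qed

lemma corner_param_line_point:
  assumes "x0 \<in> carrier R \<times> carrier R" "x1 \<in> carrier R \<times> carrier R"
    "p \<in> carrier R \<times> carrier R" "d \<in> carrier R \<times> carrier R" "t \<in> carrier R"
  shows "corner R x0 x1 (fst p \<oplus> t \<otimes> fst d, snd p \<oplus> t \<otimes> snd d) \<longleftrightarrow>
    dotp R (vsub R x1 x0) (vsub R p x1) \<oplus> t \<otimes> dotp R (vsub R x1 x0) d = \<zero>"
proof -
  have "v1 \<otimes> (p1 \<oplus> t \<otimes> d1 \<ominus> a1) \<oplus> v2 \<otimes> (p2 \<oplus> t \<otimes> d2 \<ominus> b1)
      = v1 \<otimes> (p1 \<ominus> a1) \<oplus> v2 \<otimes> (p2 \<ominus> b1) \<oplus> t \<otimes> (v1 \<otimes> d1 \<oplus> v2 \<otimes> d2)"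
    if "v1 \<in> carrier R" "v2 \<in> carrier R" "p1 \<in> carrier R" "p2 \<in> carrier R"
      "d1 \<in> carrier R" "d2 \<in> carrier R" "a1 \<in> carrier R" "b1 \<in> carrier R"
    for v1 v2 p1 p2 d1 d2 a1 b1
    using that assms(5) by Ring.algebra
  then show ?thesis
    unfolding corner_def dotp_def vsub_def fst_conv snd_conv
    using assms by (auto simp: mem_Times_iff)
qed

end

lemma (in domain) affine_eq_zero_at_two_points:
  assumes c: "e \<in> carrier R" "k \<in> carrier R" "t \<in> carrier R" "t' \<in> carrier R"
    and "e \<oplus> t \<otimes> k = \<zero>" "e \<oplus> t' \<otimes> k = \<zero>" "t \<noteq> t'"
  shows "k = \<zero> \<and> e = \<zero>"
proof -
  have "(t \<ominus> t') \<otimes> k = (e \<oplus> t \<otimes> k) \<ominus> (e \<oplus> t' \<otimes> k)"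
    using c by Ring.algebra
  then have "(t \<ominus> t') \<otimes> k = \<zero>"
    using assms by simp
  moreover have "t \<ominus> t' \<noteq> \<zero>"
    using assms by simp
  ultimately have "k = \<zero>"
    using integral c by blast
  then show ?thesis
    using assms by simp
qed

lemma (in domain) perp_line_at_if_two_corners:
  assumes x: "x0 \<in> carrier R \<times> carrier R" "x1 \<in> carrier R \<times> carrier R"
    and pd: "p \<in> carrier R \<times> carrier R" "d \<in> carrier R \<times> carrier R"
    and y: "y \<in> param_line R p d" "y' \<in> param_line R p d" "y \<noteq> y'"
    and "corner R x0 x1 y" "corner R x0 x1 y'"
  shows "perp_line_at R x0 x1 p d"
proof -
  obtain t t' where t: "t \<in> carrier R" "t' \<in> carrier R" "t \<noteq> t'"
    and yt: "y = (fst p \<oplus> t \<otimes> fst d, snd p \<oplus> t \<otimes> snd d)"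
      "y' = (fst p \<oplus> t' \<otimes> fst d, snd p \<oplus> t' \<otimes> snd d)"
    using y unfolding param_line_def by auto
  let ?e = "dotp R (vsub R x1 x0) (vsub R p x1)" and ?k = "dotp R (vsub R x1 x0) d"
  have "?e \<in> carrier R" "?k \<in> carrier R"
    using x pd by (auto simp: dotp_def vsub_def mem_Times_iff)
  moreover have "?e \<oplus> t \<otimes> ?k = \<zero>" "?e \<oplus> t' \<otimes> ?k = \<zero>"
    using corner_param_line_point[OF x pd t(1)] corner_param_line_point[OF x pd t(2)] assms
    unfolding yt by auto
  ultimately show ?thesis
    unfolding perp_line_at_def using affine_eq_zero_at_two_points t by blast
qed

locale anisotropic_field = field +
  assumes minus_one_nonsquare: "\<not> (\<exists>x\<in>carrier R. x \<otimes> x = \<ominus> \<one>)"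
begin

lemma sum_squares_eq_zero:
  assumes a: "a \<in> carrier R" and b: "b \<in> carrier R" and h: "a \<otimes> a \<oplus> b \<otimes> b = \<zero>"
  shows "a = \<zero> \<and> b = \<zero>"
proof (cases "b = \<zero>")
  case True
  then show ?thesis using h a integral[of a a] by simp
next
  case False
  then have ib: "inv b \<in> carrier R" and binv: "b \<otimes> inv b = \<one>"
    using b field_Units by auto
  have aa: "a \<otimes> a = \<ominus> (b \<otimes> b)"
    using h a b by (simp add: minus_equality)
  have "(a \<otimes> inv b) \<otimes> (a \<otimes> inv b) = (a \<otimes> a) \<otimes> (inv b \<otimes> inv b)"
    using a ib by Ring.algebra
  also have "\<dots> = \<ominus> ((b \<otimes> inv b) \<otimes> (b \<otimes> inv b))"
    unfolding aa using b ib by Ring.algebra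
  finally have "(a \<otimes> inv b) \<otimes> (a \<otimes> inv b) = \<ominus> \<one>"
    using binv by simp
  then show ?thesis using minus_one_nonsquare a ib by blast
qed

lemma dotp_self_eq_zero:
  assumes "v \<in> carrier R \<times> carrier R" "dotp R v v = \<zero>"
  shows "v = (\<zero>, \<zero>)"
  using assms sum_squares_eq_zero[of "fst v" "snd v"] unfolding dotp_def
  by (auto simp: mem_Times_iff prod_eq_iff)

lemma rectangle_fourth_vertex:
  assumes x: "x0 \<in> carrier R \<times> carrier R" "x1 \<in> carrier R \<times> carrier R"
    "x2 \<in> carrier R \<times> carrier R" "x3 \<in> carrier R \<times> carrier R"
    and "rectangle R x0 x1 x2 x3"
  shows "x3 = (fst x2 \<ominus> fst x1 \<oplus> fst x0, snd x2 \<ominus> snd x1 \<oplus> snd x0)"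
proof -
  let ?e = "vsub R (vsub R x3 x2) (vsub R x0 x1)"
  have "dotp R ?e ?e = \<zero>"
    using assms dotp_quadrilateral_identity[OF x]
    by (simp add: rectangle_def corner_def)
  then have "?e = (\<zero>, \<zero>)"
    using x by (intro dotp_self_eq_zero) (auto simp: vsub_def mem_Times_iff)
  then have e: "fst x3 \<ominus> fst x2 \<ominus> (fst x0 \<ominus> fst x1) = \<zero>"
    "snd x3 \<ominus> snd x2 \<ominus> (snd x0 \<ominus> snd x1) = \<zero>"
    by (simp_all add: vsub_def)
  have coord: "a3 = a2 \<ominus> a1 \<oplus> a0" if "a3 \<ominus> a2 \<ominus> (a0 \<ominus> a1) = \<zero>"
    and "a0 \<in> carrier R" "a1 \<in> carrier R" "a2 \<in> carrier R" "a3 \<in> carrier R" for a0 a1 a2 a3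
  proof -
    have "a3 = (a3 \<ominus> a2 \<ominus> (a0 \<ominus> a1)) \<oplus> (a2 \<ominus> a1 \<oplus> a0)"
      using that(2-5) by Ring.algebra
    then show ?thesis using that by simp
  qed
  show ?thesis
    using coord[OF e(1)] coord[OF e(2)] x by (simp add: mem_Times_iff prod_eq_iff)
qed

lemma perp_vector_scaled:
  assumes c: "d1 \<in> carrier R" "d2 \<in> carrier R" "v1 \<in> carrier R" "v2 \<in> carrier R"
      "q1 \<in> carrier R" "q2 \<in> carrier R"
    and d: "\<not> (d1 = \<zero> \<and> d2 = \<zero>)" and v: "\<not> (v1 = \<zero> \<and> v2 = \<zero>)"
    and perp: "v1 \<otimes> d1 \<oplus> v2 \<otimes> d2 = \<zero>"
    and through: "v1 \<otimes> (q1 \<ominus> v1) \<oplus> v2 \<otimes> (q2 \<ominus> v2) = \<zero>"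
  shows "(d1 \<otimes> d1 \<oplus> d2 \<otimes> d2) \<otimes> v1 = \<ominus> ((q2 \<otimes> d1 \<ominus> q1 \<otimes> d2) \<otimes> d2)"
    and "(d1 \<otimes> d1 \<oplus> d2 \<otimes> d2) \<otimes> v2 = (q2 \<otimes> d1 \<ominus> q1 \<otimes> d2) \<otimes> d1"
proof -
  define N where "N = d1 \<otimes> d1 \<oplus> d2 \<otimes> d2"
  define a where "a = v2 \<otimes> d1 \<ominus> v1 \<otimes> d2"
  define b where "b = q2 \<otimes> d1 \<ominus> q1 \<otimes> d2"
  have N: "N \<in> carrier R" and aC: "a \<in> carrier R" and bC: "b \<in> carrier R"
    unfolding N_def a_def b_def using c by auto
  have "N \<noteq> \<zero>" using sum_squares_eq_zero[OF c(1,2)] d unfolding N_def by blast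
  \<comment> \<open>As v is orthogonal to d, N v = a (-d2, d1); then v \<cdot> (q - v) = 0 forces a = b.\<close>
  have "N \<otimes> v1 = \<ominus> (a \<otimes> d2) \<oplus> (v1 \<otimes> d1 \<oplus> v2 \<otimes> d2) \<otimes> d1"
    unfolding N_def a_def using c by Ring.algebra
  then have v1: "N \<otimes> v1 = \<ominus> (a \<otimes> d2)" using perp c aC by simp
  have "N \<otimes> v2 = a \<otimes> d1 \<oplus> (v1 \<otimes> d1 \<oplus> v2 \<otimes> d2) \<otimes> d2"
    unfolding N_def a_def using c by Ring.algebra
  then have v2: "N \<otimes> v2 = a \<otimes> d1" using perp c aC by simp
  have "N \<otimes> (v1 \<otimes> (q1 \<ominus> v1) \<oplus> v2 \<otimes> (q2 \<ominus> v2))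
      = (q1 \<ominus> v1) \<otimes> (N \<otimes> v1) \<oplus> (q2 \<ominus> v2) \<otimes> (N \<otimes> v2)"
    using c N by Ring.algebra
  also have "\<dots> = a \<otimes> (b \<ominus> a)"
    unfolding v1 v2 a_def b_def using c by Ring.algebra
  finally have "a \<otimes> (b \<ominus> a) = \<zero>"
    using through N by simp
  moreover have "a \<noteq> \<zero>"
  proof
    assume "a = \<zero>"
    then have "N \<otimes> v1 = \<zero>" "N \<otimes> v2 = \<zero>" using v1 v2 c by auto
    then show False using integral \<open>N \<noteq> \<zero>\<close> N c v by blast
  qed
  ultimately have "b \<ominus> a = \<zero>" using integral[of a "b \<ominus> a"] aC bC by auto
  then have "b = a" using aC bC by simp
  then show "N \<otimes> v1 = \<ominus> (b \<otimes> d2)" and "N \<otimes> v2 = b \<otimes> d1"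
    using v1 v2 by simp_all
qed

lemma perp_line_at_unique:
  assumes x: "x0 \<in> carrier R \<times> carrier R" "x1 \<in> carrier R \<times> carrier R"
      "y1 \<in> carrier R \<times> carrier R"
    and pd: "p \<in> carrier R \<times> carrier R" "d \<in> carrier R \<times> carrier R" "d \<noteq> (\<zero>, \<zero>)"
    and ne: "x1 \<noteq> x0" "y1 \<noteq> x0"
    and perp: "perp_line_at R x0 x1 p d" "perp_line_at R x0 y1 p d"
  shows "x1 = y1"
proof -
  obtain a0 b0 p1 p2 d1 d2 where eqs: "x0 = (a0, b0)" "p = (p1, p2)" "d = (d1, d2)"
    by (cases x0, cases p, cases d) auto
  have c: "a0 \<in> carrier R" "b0 \<in> carrier R" "p1 \<in> carrier R" "p2 \<in> carrier R"
    "d1 \<in> carrier R" "d2 \<in> carrier R" using x pd unfolding eqs by auto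
  define N where "N = d1 \<otimes> d1 \<oplus> d2 \<otimes> d2"
  define k where "k = (p2 \<ominus> b0) \<otimes> d1 \<ominus> (p1 \<ominus> a0) \<otimes> d2"
  have scaled: "N \<otimes> (a \<ominus> a0) = \<ominus> (k \<otimes> d2) \<and> N \<otimes> (b \<ominus> b0) = k \<otimes> d1"
    if y: "(a, b) \<in> carrier R \<times> carrier R" "(a, b) \<noteq> x0" "perp_line_at R x0 (a, b) p d" for a b
  proof -
    have ab: "a \<in> carrier R" "b \<in> carrier R" using y(1) by auto
    have "p1 \<ominus> a = (p1 \<ominus> a0) \<ominus> (a \<ominus> a0)" "p2 \<ominus> b = (p2 \<ominus> b0) \<ominus> (b \<ominus> b0)"
      using c ab by Ring.algebra+
    then have "(a \<ominus> a0) \<otimes> d1 \<oplus> (b \<ominus> b0) \<otimes> d2 = \<zero>"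
      "(a \<ominus> a0) \<otimes> ((p1 \<ominus> a0) \<ominus> (a \<ominus> a0)) \<oplus> (b \<ominus> b0) \<otimes> ((p2 \<ominus> b0) \<ominus> (b \<ominus> b0)) = \<zero>"
      using y(3) unfolding eqs perp_line_at_def dotp_def vsub_def by simp_all
    moreover have "\<not> (a \<ominus> a0 = \<zero> \<and> b \<ominus> b0 = \<zero>)"
      using y(2) ab c eqs by simp
    ultimately show ?thesis
      using perp_vector_scaled[of d1 d2 "a \<ominus> a0" "b \<ominus> b0" "p1 \<ominus> a0" "p2 \<ominus> b0"] c ab pd(3) eqs
      unfolding N_def k_def by simp
  qed
  have "N \<noteq> \<zero>" "N \<in> carrier R"
    using sum_squares_eq_zero[OF c(5,6)] pd(3) eqs c unfolding N_def by auto
  moreover have "N \<otimes> (fst x1 \<ominus> a0) = N \<otimes> (fst y1 \<ominus> a0)"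
    "N \<otimes> (snd x1 \<ominus> b0) = N \<otimes> (snd y1 \<ominus> b0)"
    using scaled[of "fst x1" "snd x1"] scaled[of "fst y1" "snd y1"] x perp ne by auto
  ultimately have "fst x1 \<ominus> a0 = fst y1 \<ominus> a0" "snd x1 \<ominus> b0 = snd y1 \<ominus> b0"
    using x c by (auto simp: m_lcancel mem_Times_iff)
  then show ?thesis
    using x c by (simp add: a_minus_def prod_eq_iff mem_Times_iff)
qed

lemma rect_count_le_card_corners:
  assumes A: "finite A" "A \<subseteq> carrier R \<times> carrier R"
  shows "rect_count R A \<le> card (corners R A)"
  unfolding rect_count_def
proof (rule card_inj_on_le)
  have "x3 = y3" if "rectangle R x0 x1 x2 x3" "rectangle R x0 x1 x2 y3"
    and "x0 \<in> A" "x1 \<in> A" "x2 \<in> A" "x3 \<in> A" "y3 \<in> A" for x0 x1 x2 x3 y3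
    using rectangle_fourth_vertex[of x0 x1 x2 x3] rectangle_fourth_vertex[of x0 x1 x2 y3] that A(2)
    by auto
  then show "inj_on (\<lambda>(x0, x1, x2, x3). (x0, x1, x2))
      {(x0, x1, x2, x3). x0 \<in> A \<and> x1 \<in> A \<and> x2 \<in> A \<and> x3 \<in> A \<and> rectangle R x0 x1 x2 x3}"
    by (auto intro!: inj_onI)
  show "(\<lambda>(x0, x1, x2, x3). (x0, x1, x2)) `
      {(x0, x1, x2, x3). x0 \<in> A \<and> x1 \<in> A \<and> x2 \<in> A \<and> x3 \<in> A \<and> rectangle R x0 x1 x2 x3}
      \<subseteq> corners R A"
    by (auto simp: corners_def rectangle_def)
  show "finite (corners R A)"
    by (rule finite_subset[of _ "A \<times> A \<times> A"]) (auto simp: corners_def A(1))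
qed

lemma card_corners_le:
  assumes A: "finite A" "A \<subseteq> carrier R \<times> carrier R" and "lines_through R A p d"
  shows "card (corners R A) \<le> (card ((\<lambda>x. (p x, d x)) ` A) + 2) * card A ^ 2"
proof -
  note lines = \<open>lines_through R A p d\<close>[unfolded lines_through_def, rule_format]
  let ?n = "card A" and ?\<Lambda> = "(\<lambda>x. (p x, d x)) ` A"
  define D where "D = corners R A \<inter> {(x0, x1, x2). x0 = x1}"
  define T where "T = corners R A \<inter> {(x0, x1, x2). x0 \<noteq> x1 \<and> \<not> perp_line_at R x0 x1 (p x2) (d x2)}"
  define P where "P = corners R A \<inter> {(x0, x1, x2). x0 \<noteq> x1 \<and> perp_line_at R x0 x1 (p x2) (d x2)}"
  have "corners R A = D \<union> T \<union> P"
    by (auto simp: D_def T_def P_def)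
  then have "card (corners R A) \<le> card D + card T + card P"
    by (metis card_Un_le add_le_mono1 order_trans)
  also have "\<dots> \<le> card (A \<times> A) + card (A \<times> A \<times> ?\<Lambda>) + card (A \<times> A)"
  proof (intro add_mono)
    show "card D \<le> card (A \<times> A)"
      by (rule card_inj_on_le[of "\<lambda>(x0, x1, x2). (x0, x2)"]) (auto simp: D_def corners_def inj_on_def A(1))
    show "card T \<le> card (A \<times> A \<times> ?\<Lambda>)"
    proof (rule card_inj_on_le[of "\<lambda>(x0, x1, x2). (x0, x1, p x2, d x2)"])
      have "x2 = y2" if "(x0, x1, x2) \<in> T" "(x0, x1, y2) \<in> T" "p x2 = p y2" "d x2 = d y2"
        for x0 x1 x2 y2
        using that lines[of x2] lines[of y2] perp_line_at_if_two_corners[of x0 x1 "p x2" "d x2" x2 y2] A(2)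
        by (auto simp: T_def corners_def)
      then show "inj_on (\<lambda>(x0, x1, x2). (x0, x1, p x2, d x2)) T"
        by (auto intro!: inj_onI)
    qed (auto simp: T_def corners_def A(1))
    show "card P \<le> card (A \<times> A)"
    proof (rule card_inj_on_le[of "\<lambda>(x0, x1, x2). (x0, x2)"])
      have "x1 = y1" if "(x0, x1, x2) \<in> P" "(x0, y1, x2) \<in> P" for x0 x1 y1 x2
        using that lines[of x2] perp_line_at_unique[of x0 x1 y1 "p x2" "d x2"] A(2)
        by (auto simp: P_def corners_def)
      then show "inj_on (\<lambda>(x0, x1, x2). (x0, x2)) P"
        by (auto intro!: inj_onI)
    qed (auto simp: P_def corners_def A(1))
  qed
  also have "\<dots> = (card ?\<Lambda> + 2) * ?n ^ 2"
    by (simp add: card_cartesian_product power2_eq_square algebra_simps)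
  finally show ?thesis .
qed

end

lemma is_line_iff_param:
  "is_line R l \<longleftrightarrow> (\<exists>p d. p \<in> carrier R \<times> carrier R \<and> d \<in> carrier R \<times> carrier R \<and>
     d \<noteq> (\<zero>\<^bsub>R\<^esub>, \<zero>\<^bsub>R\<^esub>) \<and> l = param_line R p d)"
  unfolding is_line_def param_line_def ..

lemma k_regularE:
  assumes "k_regular R C0 k A"
  obtains L P where "\<forall>l\<in>L. is_line R l" "k / C0 \<le> real (card L)" "real (card L) \<le> C0 * k"
    "A = (\<Union>l\<in>L. P l)" "\<forall>l\<in>L. P l \<subseteq> l"
    "\<forall>l\<in>L. real (card (P l)) \<le> C0 * real (card A) / k"
proof -
  from assms obtain L P where "\<forall>l\<in>L. is_line R l" "k / C0 \<le> real (card L)" "real (card L) \<le> C0 * k"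
    "A = (\<Union>l\<in>L. P l)" "\<forall>l\<in>L. P l \<subseteq> l \<and> real (card A) / (C0 * k) \<le> real (card (P l)) \<and>
                    real (card (P l)) \<le> C0 * real (card A) / k"
    unfolding k_regular_def by (elim conjE exE)
  then show thesis using that by (metis (no_types, lifting))
qed

lemma k_regular_pos:
  assumes "C0 \<ge> 1" "finite A" "A \<noteq> {}" "k_regular R C0 k A"
  shows "k > 0"
proof (rule ccontr)
  assume "\<not> k > 0"
  obtain L P where "\<forall>l\<in>L. is_line R l" "k / C0 \<le> real (card L)" "real (card L) \<le> C0 * k"
    and cover: "A = (\<Union>l\<in>L. P l)" and "\<forall>l\<in>L. P l \<subseteq> l"
    and size: "\<forall>l\<in>L. real (card (P l)) \<le> C0 * real (card A) / k"
    using assms(4) by (rule k_regularE)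
  obtain l where "l \<in> L" "P l \<noteq> {}"
    using cover assms(3) by auto
  moreover have "finite (P l)"
    using cover assms(2) \<open>l \<in> L\<close> by (metis UN_upper finite_subset)
  ultimately have "1 \<le> C0 * real (card A) / k"
    using size by (metis One_nat_def Suc_leI card_gt_0_iff of_nat_1 of_nat_le_iff order_trans)
  moreover have "C0 * real (card A) / k \<le> 0"
    using assms(1) \<open>\<not> k > 0\<close> by (intro divide_nonneg_nonpos) auto
  ultimately show False
    by linarith
qed

lemma k_regular_lines_through:
  assumes "C0 \<ge> 1" "finite A" "A \<noteq> {}" "k_regular R C0 k A"
  shows "\<exists>p d. lines_through R A p d \<and> real (card ((\<lambda>x. (p x, d x)) ` A)) \<le> C0 * k"
proof -
  obtain L P where lines: "\<forall>l\<in>L. is_line R l"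
    and L: "k / C0 \<le> real (card L)" "real (card L) \<le> C0 * k"
    and cover: "A = (\<Union>l\<in>L. P l)" "\<forall>l\<in>L. P l \<subseteq> l"
    and "\<forall>l\<in>L. real (card (P l)) \<le> C0 * real (card A) / k"
    using assms(4) by (rule k_regularE)
  have "finite L"
    using L(1) k_regular_pos[OF assms] assms(1) card_ge_0_finite
    by (metis divide_pos_pos less_le_trans of_nat_0_less_iff zero_less_one order_less_le_trans)
  obtain line where line: "\<forall>x\<in>A. line x \<in> L \<and> x \<in> P (line x)"
    using bchoice[of A "\<lambda>x l. l \<in> L \<and> x \<in> P l"] cover(1) by blast
  obtain pl dl where pd: "\<forall>l\<in>L. pl l \<in> carrier R \<times> carrier R \<and> dl l \<in> carrier R \<times> carrier R \<and>
      dl l \<noteq> (\<zero>\<^bsub>R\<^esub>, \<zero>\<^bsub>R\<^esub>) \<and> l = param_line R (pl l) (dl l)"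
    using lines unfolding is_line_iff_param by metis
  have "lines_through R A (\<lambda>x. pl (line x)) (\<lambda>x. dl (line x))"
    unfolding lines_through_def using line pd cover(2) by blast
  moreover have "card ((\<lambda>x. (pl (line x), dl (line x))) ` A) \<le> card ((\<lambda>l. (pl l, dl l)) ` L)"
    using line \<open>finite L\<close> by (intro card_mono) auto
  moreover have "card ((\<lambda>l. (pl l, dl l)) ` L) \<le> card L"
    by (rule card_image_le[OF \<open>finite L\<close>])
  ultimately show ?thesis
    using L(2) by (intro exI[of _ "\<lambda>x. pl (line x)"] exI[of _ "\<lambda>x. dl (line x)"]) auto
qed

text \<open>From k-regularity only the covering of A by at most C0 k lines and the upper bound on the
  sizes of the pieces (which forces k > 0) are used.\<close>

lemma (in anisotropic_field) rect_count_le_of_k_regular: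
  assumes "C0 \<ge> 1" "finite A" "A \<subseteq> carrier R \<times> carrier R" "k_regular R C0 k A"
  shows "real (rect_count R A) \<le> 3 * C0 * real (card A) ^ 2 * k"
proof (cases "A = {}")
  case True
  then show ?thesis by (simp add: rect_count_def split_def)
next
  case False
  then obtain p d where lines: "lines_through R A p d"
    and few: "real (card ((\<lambda>x. (p x, d x)) ` A)) \<le> C0 * k"
    using k_regular_lines_through[OF assms(1,2) _ assms(4)] by blast
  let ?m = "card ((\<lambda>x. (p x, d x)) ` A)"
  have "1 \<le> ?m"
    using False assms(2) by (simp add: Suc_le_eq card_gt_0_iff)
  have "rect_count R A \<le> (?m + 2) * card A ^ 2"
    using rect_count_le_card_corners[OF assms(2,3)] card_corners_le[OF assms(2,3) lines]
    by linarith
  then have "real (rect_count R A) \<le> real ((?m + 2) * card A ^ 2)"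
    by (simp only: of_nat_le_iff)
  also have "\<dots> = (real ?m + 2) * real (card A) ^ 2"
    by (simp add: algebra_simps)
  also have "\<dots> \<le> (3 * C0 * k) * real (card A) ^ 2"
    using few \<open>1 \<le> ?m\<close> by (intro mult_right_mono) auto
  finally show ?thesis
    by (simp add: algebra_simps)
qed

theorem lemma4p3:
  fixes C0 :: real
  assumes "C0 \<ge> 1"
  shows "\<exists>C::real. \<forall>(R :: 'a ring) (k :: real) (A :: ('a \<times> 'a) set).
           field R \<and> finite (carrier R) \<and> odd_char R \<and>
           \<not> (\<exists>x\<in>carrier R. x \<otimes>\<^bsub>R\<^esub> x = \<ominus>\<^bsub>R\<^esub> \<one>\<^bsub>R\<^esub>) \<and>
           A \<subseteq> carrier R \<times> carrier R \<and> k_regular R C0 k A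
           \<longrightarrow> real (rect_count R A) \<le> C * real (card A) ^ 2 * k"
proof (intro exI[of _ "3 * C0"] allI impI, elim conjE)
  fix R :: "'a ring" and k :: real and A :: "('a \<times> 'a) set"
  assume "field R" "finite (carrier R)" "\<not> (\<exists>x\<in>carrier R. x \<otimes>\<^bsub>R\<^esub> x = \<ominus>\<^bsub>R\<^esub> \<one>\<^bsub>R\<^esub>)"
    and A: "A \<subseteq> carrier R \<times> carrier R" and "k_regular R C0 k A"
  then interpret anisotropic_field R
    by (simp add: anisotropic_field_def anisotropic_field_axioms_def)
  have "finite A"
    using A \<open>finite (carrier R)\<close> finite_subset by blast
  then show "real (rect_count R A) \<le> 3 * C0 * real (card A) ^ 2 * k"
    using rect_count_le_of_k_regular assms A \<open>k_regular R C0 k A\<close> by blast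
qed

end
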